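(* Let $0<q\leq 1$, $k\geq 1$ and $t\geq k$ be real numbers. If $x\geq 1$ or $x\leq 0$, then $$(1+t)^x\leq q^x+\frac{(1+k)^x-q^x}{k^x}\,t^x .$$ *)

theory Defs
  imports Complex_Main
begin

end

theory Submission
  imports Defs
begin

text \<open>Dividing by \<open>t powr x\<close>, the claim says that \<open>t \<mapsto> ((1 + t) powr x - q powr x) / t powr x\<close>
  is non-increasing on \<open>t > 0\<close>. Substituting \<open>y = 1 / t\<close> turns this function into
  \<open>y \<mapsto> (1 + y) powr x - q powr x * y powr x\<close>, whose derivative
  \<open>x * ((1 + y) powr (x - 1) - q powr x * y powr (x - 1))\<close> is non-negative: for \<open>x \<ge> 1\<close> both
  factors are non-negative because \<open>q powr x \<le> 1\<close> and \<open>y < 1 + y\<close>, and for \<open>x \<le> 0\<close> both are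
  non-positive because \<open>q powr x \<ge> 1\<close> and the exponent \<open>x - 1\<close> is negative.\<close>

lemma one_le_powr_of_le_one:
  fixes q x :: real
  assumes "0 < q" "q \<le> 1" "x \<le> 0"
  shows "1 \<le> q powr x"
proof -
  have "q powr (- x) \<le> 1"
    using assms by (intro powr_le1) auto
  then show ?thesis
    using \<open>0 < q\<close> by (simp add: powr_minus inverse_le_1_iff)
qed

lemma powr_scaled_le_powr_shifted:
  fixes q x y :: real
  assumes "0 < q" "q \<le> 1" "0 < y" "1 \<le> x"
  shows "q powr x * y powr (x - 1) \<le> (1 + y) powr (x - 1)"
proof -
  have "q powr x * y powr (x - 1) \<le> y powr (x - 1)"
    using powr_le1[of x q] assms by (simp add: mult_left_le_one_le)
  also have "\<dots> \<le> (1 + y) powr (x - 1)"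
    using assms by (intro powr_mono2) auto
  finally show ?thesis .
qed

lemma powr_shifted_le_powr_scaled:
  fixes q x y :: real
  assumes "0 < q" "q \<le> 1" "0 < y" "x \<le> 0"
  shows "(1 + y) powr (x - 1) \<le> q powr x * y powr (x - 1)"
proof -
  have "(1 + y) powr (x - 1) \<le> y powr (x - 1)"
    using assms by (intro powr_mono2') auto
  also have "\<dots> \<le> q powr x * y powr (x - 1)"
    using one_le_powr_of_le_one[of q x] assms by (simp add: mult_le_cancel_right1)
  finally show ?thesis .
qed

lemma has_real_derivative_powr_shifted_minus_scaled:
  fixes c x y :: real
  assumes "0 < y"
  shows "((\<lambda>y. (1 + y) powr x - c * y powr x) has_real_derivative
          x * ((1 + y) powr (x - 1) - c * y powr (x - 1))) (at y)"
  using assms by (auto intro!: derivative_eq_intros simp: algebra_simps)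

lemma powr_shifted_minus_scaled_mono:
  fixes q x s u :: real
  assumes "0 < q" "q \<le> 1" "1 \<le> x \<or> x \<le> 0" "0 < s" "s \<le> u"
  shows "(1 + s) powr x - q powr x * s powr x \<le> (1 + u) powr x - q powr x * u powr x"
proof (rule deriv_nonneg_imp_mono[OF has_real_derivative_powr_shifted_minus_scaled])
  fix y assume "y \<in> {s..u}"
  then show "0 < y" using \<open>0 < s\<close> by auto
  then show "0 \<le> x * ((1 + y) powr (x - 1) - q powr x * y powr (x - 1))"
    using assms(3) powr_scaled_le_powr_shifted[OF assms(1,2) \<open>0 < y\<close>]
      powr_shifted_le_powr_scaled[OF assms(1,2) \<open>0 < y\<close>]
    by (auto intro: mult_nonneg_nonneg mult_nonpos_nonpos)
qed (rule \<open>s \<le> u\<close>)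

lemma powr_shift_gap_div_eq:
  fixes q x t :: real
  assumes "0 < t"
  shows "((1 + t) powr x - q powr x) / t powr x = (1 + 1 / t) powr x - q powr x * (1 / t) powr x"
proof -
  have "(1 + t) / t = 1 + 1 / t"
    using assms by (simp add: field_simps)
  then have "(1 + t) powr x / t powr x = (1 + 1 / t) powr x"
    using assms by (metis powr_divide add_pos_pos zero_less_one less_imp_le)
  then show ?thesis
    by (simp add: diff_divide_distrib powr_divide)
qed

lemma powr_shift_gap_div_antimono:
  fixes q x k t :: real
  assumes "0 < q" "q \<le> 1" "1 \<le> x \<or> x \<le> 0" "0 < k" "k \<le> t"
  shows "((1 + t) powr x - q powr x) / t powr x \<le> ((1 + k) powr x - q powr x) / k powr x"
  using assms powr_shifted_minus_scaled_mono[of q x "1 / t" "1 / k"]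
  by (simp add: powr_shift_gap_div_eq frac_le)

theorem lemma2:
  fixes q k t x :: real
  assumes "0 < q" and "q \<le> 1" and "k \<ge> 1" and "t \<ge> k"
    and "x \<ge> 1 \<or> x \<le> 0"
  shows "(1 + t) powr x \<le> q powr x + ((1 + k) powr x - q powr x) / (k powr x) * t powr x"
proof -
  have "0 < t" using assms by linarith
  have "((1 + t) powr x - q powr x) / t powr x \<le> ((1 + k) powr x - q powr x) / k powr x"
    using assms by (intro powr_shift_gap_div_antimono) auto
  then have "(1 + t) powr x - q powr x \<le> ((1 + k) powr x - q powr x) / k powr x * t powr x"
    using \<open>0 < t\<close> by (simp add: divide_le_eq)
  then show ?thesis by simp
qed

end
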